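(* $S^{(1)}(\beta)=0$ if and only if \[ \begin{cases} K(\chi)-K(\rho\chi)\equiv 0\pmod{4\mathcal{P}} & \text{if } q\equiv 1\pmod 4,\\ 2+K(\chi)+K(\rho\chi)\equiv 0\pmod{4\mathcal{P}} & \text{if } q\equiv 3\pmod 4, \end{cases} \] where the congruences are modulo the ideal $4\mathcal{P}$ of $\mathbb{Z}[\zeta_k]$.
   Context: Let $p$ be an odd prime, $m\ge1$, $q=p^m$, $\alpha$ a primitive element of $\mathbb{F}_q$, and $T=q-1$. The binary SLCE sequence $(s_n)_{n\ge0}$ is defined as follows: $s_n=1$ if $\alpha^n+1$ is a nonzero non-square of $\mathbb{F}_q$, and $s_n=0$ otherwise. Put $S(X)=\sum_{n=0}^{T-1}s_nX^n\in\mathbb{F}_2[X]$. For an integer $t\ge0$, the $t$-th Hasse derivative is $S^{(t)}(X)=\sum_{n=t}^{T-1}\binom{n}{t}s_nX^{n-t}$, with coefficients reduced mod $2$. Let $\beta$ be an element of an algebraic closure of $\mathbb{F}_2$ with $\beta^T=1$ and multiplicative order $k>1$ (so $k$ is odd). Let $f$ be the order of $2$ modulo $k$, and write $\zeta_N=e^{2\pi i/N}$. Let $\mathcal{P}$ be a prime ideal of $\mathbb{Z}[\zeta_k]$ containing $2$. Fix a field isomorphism $\phi:\mathbb{F}_2(\beta)=\mathbb{F}_{2^f}\to\mathbb{Z}[\zeta_k]/\mathcal{P}$, and let $\zeta$ be the unique complex $k$-th root of unity with $\phi(\beta)=\zeta+\mathcal{P}$. Multiplicative characters of $\mathbb{F}_q$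 are homomorphisms $\mathbb{F}_q^*\to\mathbb{C}^*$, extended by value $0$ at $0$. Let $\rho$ be the quadratic character. Let $\chi$ be the character with $\chi(\alpha^n)=\zeta^n$. For a character $\psi$, set $K(\psi)=\sum_{x\in\mathbb{F}_q}\rho(x)\psi(1-x)$. *)

theory Defs
  imports Complex_Main "HOL-Computational_Algebra.Polynomial"
begin

definition primitive_elem :: "'a::{field,finite} \<Rightarrow> bool" where
  "primitive_elem a \<longleftrightarrow> a \<noteq> 0 \<and> (\<forall>x. x \<noteq> 0 \<longrightarrow> (\<exists>n::nat. a ^ n = x))"

definition is_square :: "'a::field \<Rightarrow> bool" where
  "is_square x \<longleftrightarrow> (\<exists>y. y ^ 2 = x)"

definition slce :: "'a::{field,finite} \<Rightarrow> nat \<Rightarrow> bool" where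
  "slce a n \<longleftrightarrow> a ^ n + 1 \<noteq> 0 \<and> \<not> is_square (a ^ n + 1)"

text \<open>t-th Hasse derivative of S(X) = sum_{n<T} s_n X^n, evaluated at b (in a field of
  characteristic 2, so the binomial coefficients are reduced mod 2 automatically).\<close>
definition hasse_S :: "'a::{field,finite} \<Rightarrow> nat \<Rightarrow> 'b::field \<Rightarrow> 'b" where
  "hasse_S a t b = (\<Sum>n\<in>{t ..< card (UNIV :: 'a set) - 1}.
      of_nat (n choose t) * (if slce a n then 1 else 0) * b ^ (n - t))"

definition rho :: "'a::{field,finite} \<Rightarrow> complex" where
  "rho x = (if x = 0 then 0 else if is_square x then 1 else -1)"

definition chi :: "'a::{field,finite} \<Rightarrow> complex \<Rightarrow> 'a \<Rightarrow> complex" where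
  "chi a z x = (if x = 0 then 0 else z ^ (LEAST n. a ^ n = x))"

definition Ksum :: "('a::{field,finite} \<Rightarrow> complex) \<Rightarrow> complex" where
  "Ksum psi = (\<Sum>x\<in>UNIV. rho x * psi (1 - x))"

definition is_subfield :: "'b::field set \<Rightarrow> bool" where
  "is_subfield F \<longleftrightarrow> 0 \<in> F \<and> 1 \<in> F \<and> (\<forall>x\<in>F. \<forall>y\<in>F. x + y \<in> F \<and> x * y \<in> F)
     \<and> (\<forall>x\<in>F. - x \<in> F) \<and> (\<forall>x\<in>F. x \<noteq> 0 \<longrightarrow> inverse x \<in> F)"

definition gen_field :: "'b::field \<Rightarrow> 'b set" where
  "gen_field b = \<Inter>{F. is_subfield F \<and> b \<in> F}"

definition zeta :: "nat \<Rightarrow> complex" where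
  "zeta N = cis (2 * pi / real N)"

definition Zzeta :: "nat \<Rightarrow> complex set" where
  "Zzeta k = {poly (map_poly of_int p) (zeta k) | p :: int poly. True}"

definition is_ideal_in :: "complex set \<Rightarrow> complex set \<Rightarrow> bool" where
  "is_ideal_in R I \<longleftrightarrow> I \<subseteq> R \<and> 0 \<in> I \<and> (\<forall>x\<in>I. \<forall>y\<in>I. x + y \<in> I) \<and> (\<forall>x\<in>I. - x \<in> I)
     \<and> (\<forall>r\<in>R. \<forall>x\<in>I. r * x \<in> I)"

definition is_prime_ideal_in :: "complex set \<Rightarrow> complex set \<Rightarrow> bool" where
  "is_prime_ideal_in R I \<longleftrightarrow> is_ideal_in R I \<and> I \<noteq> R
     \<and> (\<forall>x\<in>R. \<forall>y\<in>R. x * y \<in> I \<longrightarrow> x \<in> I \<or> y \<in> I)"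

definition coset :: "complex \<Rightarrow> complex set \<Rightarrow> complex set" where
  "coset x I = (\<lambda>i. x + i) ` I"

definition quotient_set :: "complex set \<Rightarrow> complex set \<Rightarrow> complex set set" where
  "quotient_set R I = (\<lambda>x. coset x I) ` R"

definition is_field_iso :: "('b::field \<Rightarrow> complex set) \<Rightarrow> 'b set \<Rightarrow> complex set \<Rightarrow> complex set \<Rightarrow> bool" where
  "is_field_iso phi F R I \<longleftrightarrow> bij_betw phi F (quotient_set R I) \<and> phi 1 = coset 1 I
     \<and> (\<forall>a\<in>F. \<forall>b\<in>F. \<forall>x\<in>R. \<forall>y\<in>R. phi a = coset x I \<and> phi b = coset y I \<longrightarrow>
          phi (a + b) = coset (x + y) I \<and> phi (a * b) = coset (x * y) I)"

definition cong_4P :: "complex \<Rightarrow> complex \<Rightarrow> complex set \<Rightarrow> bool" where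
  "cong_4P x y P \<longleftrightarrow> x - y \<in> (\<lambda>p. 4 * p) ` P"

end

theory Submission
  imports Defs
begin

text \<open>
  In characteristic 2 the coefficient n of the first Hasse derivative is just the parity of n, so
  \<beta> S'(\<beta>) is the sum of \<beta>^n over the odd n < q - 1 with s_n = 1. The isomorphism \<phi> carries
  this sum to A, the sum of \<zeta>^n over the same n, so S'(\<beta>) = 0 iff A \<in> P.
  For y = \<alpha>^n the weight (1 - \<rho>(1 + y)) (1 - \<rho>(y)) is 4 if n is odd and s_n = 1 and 0 otherwise,
  except at y = -1, where it is 1 - \<rho>(-1). Summing the weights against \<chi>(y), using that the sums
  of \<chi> and of \<rho>\<chi> vanish and that \<chi>(-y) = \<chi>(y) (the order of \<zeta> is odd, so it divides (q - 1)/2),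
  gives 4A = \<rho>(-1) K(\<rho>\<chi>) - K(\<chi>) - (1 - \<rho>(-1)) with \<rho>(-1) = (-1)^((q - 1)/2).
\<close>

lemma power_mod_period:
  fixes w :: "'m::monoid_mult"
  assumes "w ^ T = 1"
  shows "w ^ (n mod T) = w ^ n"
proof -
  have "w ^ n = w ^ (T * (n div T) + n mod T)" by (simp only: mult_div_mod_eq)
  also have "\<dots> = w ^ (n mod T)" by (simp only: power_add power_mult assms power_one mult_1_left)
  finally show ?thesis by simp
qed

lemma sum_powers_root_of_unity:
  fixes w :: "'f::field"
  assumes "w ^ T = 1" and "w \<noteq> 1"
  shows "(\<Sum>n<T. w ^ n) = 0"
  using assms by (simp add: sum_gp_strict)

lemma power_eq_1_imp_order_dvd:
  fixes w :: "'m::monoid_mult"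
  assumes "w ^ k = 1" and "\<forall>j. 0 < j \<and> j < k \<longrightarrow> w ^ j \<noteq> 1" and "k > 0" and "w ^ n = 1"
  shows "k dvd n"
proof -
  have "w ^ (n mod k) = 1" using power_mod_period[OF assms(1)] assms(4) by simp
  then show ?thesis
    using assms(2,3) mod_less_divisor[OF assms(3), of n] by (auto simp: dvd_eq_mod_eq_0)
qed

lemma of_nat_char_2:
  assumes "(2::'r::ring_1) = 0"
  shows "(of_nat n :: 'r) = (if odd n then 1 else 0)"
proof (induction n)
  case (Suc n)
  have "(1::'r) + 1 = 0" using assms by simp
  then show ?case using Suc by (simp add: add.commute)
qed simp

lemma char_2_order_odd:
  fixes b :: "'b::field"
  assumes "(2::'b) = 0" and "b ^ k = 1" and "\<forall>j. 0 < j \<and> j < k \<longrightarrow> b ^ j \<noteq> 1" and "k > 0"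
  shows "odd k"
proof
  assume "even k"
  then obtain j where k: "k = 2 * j" by blast
  have "(b ^ j - 1) ^ 2 = b ^ k - 2 * b ^ j + 1"
    by (simp add: k power2_eq_square power_mult algebra_simps)
  also have "\<dots> = 0" using assms(1,2) by simp
  finally have "b ^ j = 1" by simp
  then show False using assms(3,4) k by simp
qed

lemma char_2_order_dvd_half:
  fixes b :: "'b::field"
  assumes "(2::'b) = 0" and "b ^ k = 1" and "\<forall>j. 0 < j \<and> j < k \<longrightarrow> b ^ j \<noteq> 1" and "k > 0"
    and "b ^ (2 * h) = 1"
  shows "k dvd h"
proof -
  have "coprime k 2" using char_2_order_odd[OF assms(1-4)] by simp
  moreover have "k dvd 2 * h" using power_eq_1_imp_order_dvd[OF assms(2-5)] .
  ultimately show ?thesis by (simp add: coprime_dvd_mult_right_iff)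
qed

lemma finite_field_pow_card_minus_one:
  fixes x :: "'a::{field,finite}"
  assumes "x \<noteq> 0"
  shows "x ^ (card (UNIV::'a set) - 1) = 1"
proof -
  let ?U = "UNIV - {0::'a}"
  have "bij_betw ((*) x) ?U ?U"
    by (rule bij_betw_byWitness[where f' = "(*) (inverse x)"]) (use assms in auto)
  then have "(\<Prod>y\<in>?U. x * y) = (\<Prod>y\<in>?U. y)" by (rule prod.reindex_bij_betw)
  then have "x ^ card ?U * (\<Prod>y\<in>?U. y) = 1 * (\<Prod>y\<in>?U. y)" by (simp add: prod.distrib)
  moreover have "(\<Prod>y\<in>?U. y) \<noteq> 0" by simp
  ultimately show ?thesis by (simp add: card_Diff_singleton)
qed

lemma Ksum_reflect: "Ksum psi = (\<Sum>y\<in>UNIV. rho (1 + y) * psi (- y))"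
  unfolding Ksum_def
  by (rule sum.reindex_bij_witness[where i = "\<lambda>y. 1 + y" and j = "\<lambda>x. x - 1"]) auto

lemma chi_zero [simp]: "chi a z 0 = 0"
  by (simp add: chi_def)

lemma rho_zero [simp]: "rho 0 = 0"
  by (simp add: rho_def)

definition slce_odd_indices :: "'a::{field,finite} \<Rightarrow> nat set" where
  "slce_odd_indices a = {n \<in> {..<card (UNIV :: 'a set) - 1}. odd n \<and> slce a n}"

lemma sum_slce_odd_indices:
  "(\<Sum>n\<in>slce_odd_indices a. f n)
     = (\<Sum>n<card (UNIV :: 'a set) - 1. if odd n \<and> slce a n then f n else 0)"
  for a :: "'a::{field,finite}"
  unfolding slce_odd_indices_def by (rule sum.inter_filter) simp

lemma hasse_S_1_char_2:
  fixes b :: "'b::field" and a :: "'a::{field,finite}"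
  assumes "(2::'b) = 0"
  shows "b * hasse_S a 1 b = (\<Sum>n\<in>slce_odd_indices a. b ^ n)"
proof -
  let ?T = "card (UNIV :: 'a set) - 1"
  have "b * hasse_S a 1 b = (\<Sum>n\<in>{1..<?T}. if odd n \<and> slce a n then b ^ n else 0)"
    unfolding hasse_S_def sum_distrib_left
  proof (rule sum.cong[OF refl])
    fix n assume "n \<in> {1..<?T}"
    then have "b * b ^ (n - 1) = b ^ n" by (cases n) auto
    then show "b * (of_nat (n choose 1) * (if slce a n then 1 else 0) * b ^ (n - 1))
        = (if odd n \<and> slce a n then b ^ n else 0)"
      using of_nat_char_2[OF assms, of n] by auto
  qed
  also have "\<dots> = (\<Sum>n<?T. if odd n \<and> slce a n then b ^ n else 0)"
    by (rule sum.mono_neutral_left) (auto simp: Suc_le_eq)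
  finally show ?thesis by (simp only: sum_slce_odd_indices)
qed

lemma map_poly_of_int_add:
  "map_poly (of_int :: int \<Rightarrow> 'r::ring_1) (p + q) = map_poly of_int p + map_poly of_int q"
  by (intro poly_eqI) (simp add: coeff_map_poly)

lemma poly_map_poly_of_int_mult:
  "poly (map_poly (of_int :: int \<Rightarrow> 'r::comm_ring_1) (p * q)) z
     = poly (map_poly of_int p) z * poly (map_poly of_int q) z"
proof (induction p)
  case (pCons a p)
  have "map_poly (of_int :: int \<Rightarrow> 'r) (smult a q) = smult (of_int a) (map_poly of_int q)"
    by (rule map_poly_smult) auto
  moreover have "map_poly (of_int :: int \<Rightarrow> 'r) (pCons a p) = pCons (of_int a) (map_poly of_int p)"
    by (rule map_poly_pCons) auto
  ultimately show ?case
    using pCons.IH by (simp add: map_poly_of_int_add map_poly_pCons algebra_simps)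
qed simp

lemma Zzeta_1: "1 \<in> Zzeta k"
  unfolding Zzeta_def by (auto intro!: exI[of _ 1])

lemma Zzeta_add:
  assumes "x \<in> Zzeta k" and "y \<in> Zzeta k"
  shows "x + y \<in> Zzeta k"
proof -
  from assms obtain p q
    where "x = poly (map_poly of_int p) (zeta k)" and "y = poly (map_poly of_int q) (zeta k)"
    unfolding Zzeta_def by blast
  then show ?thesis
    unfolding Zzeta_def by (auto intro!: exI[of _ "p + q"] simp: map_poly_of_int_add)
qed

lemma Zzeta_mult:
  assumes "x \<in> Zzeta k" and "y \<in> Zzeta k"
  shows "x * y \<in> Zzeta k"
proof -
  from assms obtain p q
    where "x = poly (map_poly of_int p) (zeta k)" and "y = poly (map_poly of_int q) (zeta k)"
    unfolding Zzeta_def by blast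
  then show ?thesis
    unfolding Zzeta_def by (auto intro!: exI[of _ "p * q"] simp: poly_map_poly_of_int_mult)
qed

lemma Zzeta_power: "x \<in> Zzeta k \<Longrightarrow> x ^ n \<in> Zzeta k"
  by (induction n) (simp_all add: Zzeta_1 Zzeta_mult)

lemma coset_eq_iff:
  assumes "is_ideal_in R I"
  shows "coset x I = coset y I \<longleftrightarrow> x - y \<in> I"
proof -
  have zero: "0 \<in> I" and add: "\<And>u v. u \<in> I \<Longrightarrow> v \<in> I \<Longrightarrow> u + v \<in> I"
    and neg: "\<And>u. u \<in> I \<Longrightarrow> - u \<in> I"
    using assms unfolding is_ideal_in_def by auto
  have sub: "coset x I \<subseteq> coset y I" if "x - y \<in> I" for x y
  proof
    fix u assume "u \<in> coset x I"
    then obtain i where "i \<in> I" "u = x + i" unfolding coset_def by auto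
    moreover have "x + i = y + ((x - y) + i)" by simp
    ultimately show "u \<in> coset y I" using add that unfolding coset_def by blast
  qed
  show ?thesis
  proof
    assume eq: "coset x I = coset y I"
    have "x \<in> coset x I" using zero unfolding coset_def by force
    then obtain i where "i \<in> I" "x = y + i" using eq unfolding coset_def by auto
    then show "x - y \<in> I" by simp
  next
    assume "x - y \<in> I"
    moreover from neg[OF this] have "y - x \<in> I" by simp
    ultimately show "coset x I = coset y I" using sub by blast
  qed
qed

lemma ideal_uminus_iff: "is_ideal_in R I \<Longrightarrow> - x \<in> I \<longleftrightarrow> x \<in> I"
  unfolding is_ideal_in_def by (metis minus_minus)

lemma cong_4P_iff: "cong_4P x y I \<longleftrightarrow> (x - y) / 4 \<in> I"
  unfolding cong_4P_def by force

lemma mem_iff_cong_4P: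
  fixes x y A :: complex
  assumes ideal: "is_ideal_in R I" and A: "4 * A = (-1) ^ h * y - x - (1 - (-1) ^ h)"
  shows "A \<in> I \<longleftrightarrow> (if even h then cong_4P x y I else cong_4P (2 + x + y) 0 I)"
proof (cases "even h")
  case True
  then have "(x - y) / 4 = - A" using A by (simp add: field_simps)
  then show ?thesis using True ideal_uminus_iff[OF ideal] by (simp add: cong_4P_iff)
next
  case False
  then have "(2 + x + y - 0) / 4 = - A"
    using A by (simp add: field_simps eq_neg_iff_add_eq_0 add_ac)
  then show ?thesis using False ideal_uminus_iff[OF ideal] by (simp add: cong_4P_iff)
qed

lemma is_subfield_gen_field: "is_subfield (gen_field b)"
  unfolding gen_field_def is_subfield_def by auto

lemma mem_gen_field: "b \<in> gen_field b"
  unfolding gen_field_def by auto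

locale Zzeta_residue_field_iso =
  fixes \<phi> :: "'b::field \<Rightarrow> complex set" and F :: "'b set" and k :: nat and I :: "complex set"
  assumes iso: "is_field_iso \<phi> F (Zzeta k) I"
    and ideal: "is_ideal_in (Zzeta k) I"
    and subfield: "is_subfield F"
begin

lemma inj: "inj_on \<phi> F"
  using iso by (simp add: is_field_iso_def bij_betw_def)

lemma map_one: "\<phi> 1 = coset 1 I"
  using iso by (simp add: is_field_iso_def)

lemma map_add_mult:
  assumes "a \<in> F" "b \<in> F" "x \<in> Zzeta k" "y \<in> Zzeta k" "\<phi> a = coset x I" "\<phi> b = coset y I"
  shows "\<phi> (a + b) = coset (x + y) I \<and> \<phi> (a * b) = coset (x * y) I"
  using iso assms unfolding is_field_iso_def by simp

lemma representative_exists: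
  assumes "x \<in> F"
  shows "\<exists>r\<in>Zzeta k. \<phi> x = coset r I"
proof -
  have "\<phi> ` F = quotient_set (Zzeta k) I" using iso by (simp add: is_field_iso_def bij_betw_def)
  then show ?thesis using assms unfolding quotient_set_def by (metis imageE imageI)
qed

lemma representative_mem:
  assumes "x \<in> F" and "\<phi> x = coset z I"
  shows "z \<in> Zzeta k"
proof -
  obtain r where r: "r \<in> Zzeta k" "\<phi> x = coset r I"
    using representative_exists[OF assms(1)] by blast
  then have "z - r \<in> Zzeta k"
    using assms(2) coset_eq_iff[OF ideal] ideal unfolding is_ideal_in_def by auto
  then have "r + (z - r) \<in> Zzeta k" by (intro Zzeta_add r(1))
  then show ?thesis by simp
qed

lemma map_zero: "\<phi> 0 = coset 0 I"
proof -
  have F0: "0 \<in> F" using subfield unfolding is_subfield_def by blast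
  obtain r where r: "r \<in> Zzeta k" "\<phi> 0 = coset r I" using representative_exists[OF F0] by blast
  then have "\<phi> (0 + 0) = coset (r + r) I" using map_add_mult[OF F0 F0] by blast
  then have "- r \<in> I" using r(2) coset_eq_iff[OF ideal] by simp
  then show ?thesis using r(2) coset_eq_iff[OF ideal] ideal_uminus_iff[OF ideal] by simp
qed

lemma map_eq_zero_iff:
  assumes "x \<in> F"
  shows "\<phi> x = coset 0 I \<longleftrightarrow> x = 0"
proof
  have "0 \<in> F" using subfield unfolding is_subfield_def by blast
  moreover assume "\<phi> x = coset 0 I"
  ultimately show "x = 0" using inj_onD[OF inj _ assms] map_zero by simp
qed (simp add: map_zero)

lemma map_eq_one_imp:
  assumes "x \<in> F" and "\<phi> x = coset 1 I"
  shows "x = 1"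
  using inj_onD[OF inj _ assms(1)] assms(2) map_one subfield unfolding is_subfield_def by metis

lemma map_power:
  assumes "b \<in> F" and "\<phi> b = coset z I"
  shows "b ^ n \<in> F \<and> \<phi> (b ^ n) = coset (z ^ n) I"
proof (induction n)
  case 0
  show ?case using subfield map_one unfolding is_subfield_def by simp
next
  case (Suc n)
  have z: "z \<in> Zzeta k" using representative_mem[OF assms] .
  have "\<phi> (b * b ^ n) = coset (z * z ^ n) I"
    using map_add_mult[OF assms(1) _ z Zzeta_power[OF z] assms(2)] Suc by blast
  moreover have "b * b ^ n \<in> F" using subfield assms(1) Suc unfolding is_subfield_def by blast
  ultimately show ?case by simp
qed

lemma map_sum_powers:
  assumes "b \<in> F" and "\<phi> b = coset z I" and "finite S"
  shows "(\<Sum>n\<in>S. b ^ n) \<in> F \<and> \<phi> (\<Sum>n\<in>S. b ^ n) = coset (\<Sum>n\<in>S. z ^ n) I"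
  using assms(3)
proof (induction S rule: finite_induct)
  case empty
  show ?case using subfield map_zero unfolding is_subfield_def by simp
next
  case (insert n S)
  have bn: "b ^ n \<in> F" "\<phi> (b ^ n) = coset (z ^ n) I" using map_power[OF assms(1,2)] by auto
  have sum: "(\<Sum>n\<in>S. b ^ n) \<in> F" "\<phi> (\<Sum>n\<in>S. b ^ n) = coset (\<Sum>n\<in>S. z ^ n) I"
    using insert.IH by auto
  have "\<phi> (b ^ n + (\<Sum>n\<in>S. b ^ n)) = coset (z ^ n + (\<Sum>n\<in>S. z ^ n)) I"
    using map_add_mult[OF bn(1) sum(1) representative_mem[OF bn] representative_mem[OF sum]]
      bn(2) sum(2) by blast
  moreover have "b ^ n + (\<Sum>n\<in>S. b ^ n) \<in> F"
    using subfield bn(1) sum(1) unfolding is_subfield_def by blast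
  ultimately show ?case using insert.hyps by simp
qed

lemma hasse_S_1_eq_0_iff:
  fixes a :: "'a::{field,finite}"
  assumes "(2::'b) = 0" and "b \<in> F" and "b \<noteq> 0" and "\<phi> b = coset z I"
  shows "hasse_S a 1 b = 0 \<longleftrightarrow> (\<Sum>n\<in>slce_odd_indices a. z ^ n) \<in> I"
proof -
  have fin: "finite (slce_odd_indices a)" by (simp add: slce_odd_indices_def)
  have sum: "(\<Sum>n\<in>slce_odd_indices a. b ^ n) \<in> F"
    "\<phi> (\<Sum>n\<in>slce_odd_indices a. b ^ n) = coset (\<Sum>n\<in>slce_odd_indices a. z ^ n) I"
    using map_sum_powers[OF assms(2,4) fin] by auto
  have "hasse_S a 1 b = 0 \<longleftrightarrow> (\<Sum>n\<in>slce_odd_indices a. b ^ n) = 0"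
    using hasse_S_1_char_2[OF assms(1), of b a] assms(3) by auto
  also have "\<dots> \<longleftrightarrow> coset (\<Sum>n\<in>slce_odd_indices a. z ^ n) I = coset 0 I"
    using map_eq_zero_iff[OF sum(1)] sum(2) by simp
  also have "\<dots> \<longleftrightarrow> (\<Sum>n\<in>slce_odd_indices a. z ^ n) \<in> I"
    using coset_eq_iff[OF ideal] by simp
  finally show ?thesis .
qed

end

locale odd_finite_field_primitive =
  fixes \<alpha> :: "'a::{field,finite}" and T h :: nat
  assumes primitive: "primitive_elem \<alpha>" and odd_card: "odd (card (UNIV :: 'a set))"
    and T_eq: "T = card (UNIV :: 'a set) - 1" and h_eq: "h = T div 2"
begin

lemma nonzero: "\<alpha> \<noteq> 0"
  using primitive unfolding primitive_elem_def by blast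

lemma T_eq_double: "T = 2 * h" and h_pos: "0 < h"
proof -
  have "card {0::'a, 1} \<le> card (UNIV :: 'a set)" by (rule card_mono) auto
  then have "card (UNIV :: 'a set) \<ge> 3" using odd_card by (cases "card (UNIV :: 'a set) = 2") auto
  then show "T = 2 * h" "0 < h" using odd_card unfolding T_eq h_eq by (auto elim!: oddE)
qed

lemma power_T_eq_square: "(w :: 'm::monoid_mult) ^ T = (w ^ h) ^ 2"
  by (simp add: T_eq_double power_mult[symmetric] mult.commute)

lemma power_T: "\<alpha> ^ T = 1"
  unfolding T_eq by (rule finite_field_pow_card_minus_one[OF nonzero])

lemma power_mod_T: "\<alpha> ^ (n mod T) = \<alpha> ^ n"
  by (rule power_mod_period[OF power_T])

lemma image_powers: "(\<lambda>n. \<alpha> ^ n) ` {..<T} = UNIV - {0}"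
proof
  show "(\<lambda>n. \<alpha> ^ n) ` {..<T} \<subseteq> UNIV - {0}" using nonzero by auto
  show "UNIV - {0} \<subseteq> (\<lambda>n. \<alpha> ^ n) ` {..<T}"
  proof
    fix x assume "x \<in> UNIV - {0::'a}"
    then obtain n where "\<alpha> ^ n = x" using primitive unfolding primitive_elem_def by auto
    then have "x = \<alpha> ^ (n mod T)" using power_mod_T by simp
    moreover have "n mod T < T" using T_eq_double h_pos by simp
    ultimately show "x \<in> (\<lambda>n. \<alpha> ^ n) ` {..<T}" by blast
  qed
qed

lemma inj_on_powers: "inj_on (\<lambda>n. \<alpha> ^ n) {..<T}"
proof (rule eq_card_imp_inj_on)
  show "card ((\<lambda>n. \<alpha> ^ n) ` {..<T}) = card {..<T}"
    unfolding image_powers by (simp add: card_Diff_singleton T_eq)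
qed simp

lemma power_eq_power_iff: "\<alpha> ^ i = \<alpha> ^ j \<longleftrightarrow> i mod T = j mod T"
proof -
  have "T > 0" using T_eq_double h_pos by simp
  then show ?thesis
    using inj_on_powers power_mod_T[of i] power_mod_T[of j] unfolding inj_on_def
    by (metis lessThan_iff mod_less_divisor)
qed

lemma power_eq_minus_one_iff:
  assumes "n < T"
  shows "\<alpha> ^ n = -1 \<longleftrightarrow> n = h"
proof -
  have "(\<alpha> ^ h) ^ 2 = 1" using power_T by (simp add: power_T_eq_square)
  then have "\<alpha> ^ h = 1 \<or> \<alpha> ^ h = -1" by (simp add: power2_eq_1_iff)
  moreover have "\<alpha> ^ h \<noteq> 1" using power_eq_power_iff[of h 0] T_eq_double h_pos by simp
  ultimately have "\<alpha> ^ h = -1" by blast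
  then show ?thesis using power_eq_power_iff[of n h] assms T_eq_double by auto
qed

lemma power_h: "\<alpha> ^ h = -1"
  using power_eq_minus_one_iff T_eq_double h_pos by simp

lemma chi_power:
  assumes "z ^ T = 1"
  shows "chi \<alpha> z (\<alpha> ^ n) = z ^ n"
proof -
  have "(LEAST m. \<alpha> ^ m = \<alpha> ^ n) = n mod T"
  proof (rule Least_equality)
    show "\<alpha> ^ (n mod T) = \<alpha> ^ n" by (rule power_mod_T)
    show "n mod T \<le> m" if "\<alpha> ^ m = \<alpha> ^ n" for m
      using that power_eq_power_iff by (metis mod_less_eq_dividend)
  qed
  then show ?thesis using nonzero power_mod_period[OF assms] unfolding chi_def by simp
qed

lemma is_square_power_iff: "is_square (\<alpha> ^ n) \<longleftrightarrow> even n"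
proof
  assume "is_square (\<alpha> ^ n)"
  then obtain y where y: "y ^ 2 = \<alpha> ^ n" unfolding is_square_def by blast
  then have "y \<noteq> 0" using nonzero by auto
  then obtain j where "\<alpha> ^ j = y" using primitive unfolding primitive_elem_def by blast
  then have "\<alpha> ^ (j * 2) = \<alpha> ^ n" using y by (simp add: power_mult)
  then have "(j * 2) mod T = n mod T" using power_eq_power_iff by blast
  then have "(j * 2) mod T mod 2 = n mod T mod 2" by simp
  then show "even n" using T_eq_double by (simp add: mod_mod_cancel even_iff_mod_2_eq_zero)
next
  assume "even n"
  then show "is_square (\<alpha> ^ n)" unfolding is_square_def
    by (auto intro!: exI[of _ "\<alpha> ^ (n div 2)"] simp: power_mult[symmetric])
qed

lemma rho_power: "rho (\<alpha> ^ n) = (-1) ^ n"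
  using is_square_power_iff[of n] nonzero unfolding rho_def by auto

lemma sum_UNIV_powers: "(\<Sum>x\<in>UNIV. f x) = f 0 + (\<Sum>n<T. f (\<alpha> ^ n))"
proof -
  have "(\<Sum>x\<in>UNIV. f x) = f 0 + sum f (UNIV - {0})" by (rule sum.remove) auto
  also have "sum f (UNIV - {0}) = (\<Sum>n<T. f (\<alpha> ^ n))"
    using sum.reindex[OF inj_on_powers, of f] image_powers by simp
  finally show ?thesis .
qed

lemma power_cases: obtains "(x :: 'a) = 0" | n where "x = \<alpha> ^ n"
  using primitive unfolding primitive_elem_def by blast

lemma rho_uminus: "rho (- x :: 'a) = (-1) ^ h * rho x"
proof (cases x rule: power_cases)
  case (2 n)
  have "- x = \<alpha> ^ (h + n)" using 2 power_h by (simp add: power_add)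
  then show ?thesis using 2 rho_power[of "h + n"] rho_power[of n] by (simp add: power_add)
qed simp

lemma chi_uminus:
  assumes "z ^ h = 1"
  shows "chi \<alpha> z (- x) = chi \<alpha> z x"
proof (cases x rule: power_cases)
  case (2 n)
  have zT: "z ^ T = 1" using assms by (simp add: power_T_eq_square)
  have "- x = \<alpha> ^ (h + n)" using 2 power_h by (simp add: power_add)
  then show ?thesis using 2 chi_power[OF zT, of "h + n"] chi_power[OF zT, of n] assms
    by (simp add: power_add)
qed simp

lemma sum_chi:
  assumes "z ^ T = 1" and "z \<noteq> 1"
  shows "(\<Sum>x\<in>UNIV. chi \<alpha> z x) = 0"
  using assms by (simp add: sum_UNIV_powers chi_power sum_powers_root_of_unity)

lemma sum_rho_chi:
  assumes "z ^ T = 1" and "z \<noteq> -1"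
  shows "(\<Sum>x\<in>UNIV. rho x * chi \<alpha> z x) = 0"
proof -
  have "(\<Sum>x\<in>UNIV. rho x * chi \<alpha> z x) = (\<Sum>n<T. (- z) ^ n)"
    using assms(1) by (simp add: sum_UNIV_powers chi_power rho_power power_minus[of z])
  also have "\<dots> = 0"
  proof (rule sum_powers_root_of_unity)
    show "(- z) ^ T = 1" using assms(1) T_eq_double by (simp add: power_minus' power_mult)
    show "- z \<noteq> 1" using assms(2) by (metis minus_minus)
  qed
  finally show ?thesis .
qed

lemma Ksum_chi:
  assumes "z ^ h = 1"
  shows "Ksum (chi \<alpha> z) = (\<Sum>y\<in>UNIV. rho (1 + y) * chi \<alpha> z y)"
  using chi_uminus[OF assms] by (simp add: Ksum_reflect)

lemma Ksum_rho_chi: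
  assumes "z ^ h = 1"
  shows "(-1) ^ h * Ksum (\<lambda>x. rho x * chi \<alpha> z x) = (\<Sum>y\<in>UNIV. rho (1 + y) * rho y * chi \<alpha> z y)"
proof -
  have sq: "(-1 :: complex) ^ h * (-1) ^ h = 1" by (simp flip: power_add)
  have "(-1) ^ h * Ksum (\<lambda>x. rho x * chi \<alpha> z x)
      = (\<Sum>y\<in>UNIV. ((-1) ^ h * (-1) ^ h) * (rho (1 + y) * rho y * chi \<alpha> z y))"
    using chi_uminus[OF assms] by (simp add: Ksum_reflect rho_uminus sum_distrib_left algebra_simps)
  then show ?thesis using sq by simp
qed

lemma slce_weight:
  assumes "n < T"
  shows "(1 - rho (1 + \<alpha> ^ n)) * (1 - rho (\<alpha> ^ n))
    = (if odd n \<and> slce \<alpha> n then 4 else 0) + (if n = h then 1 - (-1) ^ h else 0)"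
proof (cases "n = h")
  case True
  then show ?thesis using power_h rho_power[of h] by (simp add: slce_def)
next
  case False
  then have "1 + \<alpha> ^ n \<noteq> 0" using power_eq_minus_one_iff[OF assms] by (metis add_eq_0_iff)
  then have "rho (1 + \<alpha> ^ n) = (if slce \<alpha> n then -1 else 1)"
    unfolding rho_def slce_def by (simp add: add.commute)
  then show ?thesis using False by (simp add: rho_power)
qed

lemma four_times_sum_slce_odd:
  assumes "z ^ h = 1" and "z \<noteq> 1" and "z \<noteq> -1"
  shows "4 * (\<Sum>n\<in>slce_odd_indices \<alpha>. z ^ n)
    = (-1) ^ h * Ksum (\<lambda>x. rho x * chi \<alpha> z x) - Ksum (chi \<alpha> z) - (1 - (-1) ^ h)"
proof -
  let ?w = "\<lambda>y. (1 - rho (1 + y)) * (1 - rho y) * chi \<alpha> z y"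
  have zT: "z ^ T = 1" using assms(1) by (simp add: power_T_eq_square)
  have hT: "h < T" using T_eq_double h_pos by simp
  have "(\<Sum>y\<in>UNIV. ?w y) = (\<Sum>n<T. ?w (\<alpha> ^ n))" by (simp add: sum_UNIV_powers)
  also have "\<dots>
      = (\<Sum>n<T. 4 * (if odd n \<and> slce \<alpha> n then z ^ n else 0) + (if n = h then 1 - (-1) ^ h else 0))"
  proof (rule sum.cong[OF refl])
    fix n assume "n \<in> {..<T}"
    then show "?w (\<alpha> ^ n)
      = 4 * (if odd n \<and> slce \<alpha> n then z ^ n else 0) + (if n = h then 1 - (-1) ^ h else 0)"
      using slce_weight[of n] assms(1) by (auto simp: chi_power[OF zT])
  qed
  also have "\<dots> = 4 * (\<Sum>n\<in>slce_odd_indices \<alpha>. z ^ n) + (1 - (-1) ^ h)"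
    using hT by (simp add: sum.distrib sum_distrib_left sum_slce_odd_indices T_eq)
  finally have weight_sum: "(\<Sum>y\<in>UNIV. ?w y) = 4 * (\<Sum>n\<in>slce_odd_indices \<alpha>. z ^ n) + (1 - (-1) ^ h)" .
  have "(\<Sum>y\<in>UNIV. ?w y) = (\<Sum>y\<in>UNIV. chi \<alpha> z y) - (\<Sum>y\<in>UNIV. rho y * chi \<alpha> z y)
      - (\<Sum>y\<in>UNIV. rho (1 + y) * chi \<alpha> z y) + (\<Sum>y\<in>UNIV. rho (1 + y) * rho y * chi \<alpha> z y)"
    by (simp add: sum.distrib sum_subtractf algebra_simps)
  also have "\<dots> = (-1) ^ h * Ksum (\<lambda>x. rho x * chi \<alpha> z x) - Ksum (chi \<alpha> z)"
    using sum_chi[OF zT assms(2)] sum_rho_chi[OF zT assms(3)]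
      Ksum_chi[OF assms(1)] Ksum_rho_chi[OF assms(1)] by simp
  finally show ?thesis using weight_sum by (simp add: eq_diff_eq)
qed

end

theorem mainTheorem3:
  fixes \<alpha> :: "'a::{field,finite}"
    and \<beta> :: "'b::field"
    and p m k :: nat
    and P :: "complex set"
    and \<phi> :: "'b \<Rightarrow> complex set"
    and \<zeta> :: complex
  assumes "prime p" and "odd p" and "m \<ge> 1" and "card (UNIV :: 'a set) = p ^ m"
    and "primitive_elem \<alpha>"
    and "(2::'b) = 0"
    and "\<beta> ^ (card (UNIV :: 'a set) - 1) = 1"
    and "k > 1" and "\<beta> ^ k = 1" and "\<forall>j. 0 < j \<and> j < k \<longrightarrow> \<beta> ^ j \<noteq> 1"
    and "is_prime_ideal_in (Zzeta k) P" and "2 \<in> P"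
    and "is_field_iso \<phi> (gen_field \<beta>) (Zzeta k) P"
    and "\<zeta> ^ k = 1" and "\<phi> \<beta> = coset \<zeta> P"
  shows "hasse_S \<alpha> 1 \<beta> = 0 \<longleftrightarrow>
    (if card (UNIV :: 'a set) mod 4 = 1
     then cong_4P (Ksum (chi \<alpha> \<zeta>)) (Ksum (\<lambda>x. rho x * chi \<alpha> \<zeta> x)) P
     else cong_4P (2 + Ksum (chi \<alpha> \<zeta>) + Ksum (\<lambda>x. rho x * chi \<alpha> \<zeta> x)) 0 P)"
proof -
  define T where "T = card (UNIV :: 'a set) - 1"
  define h where "h = T div 2"
  have ideal: "is_ideal_in (Zzeta k) P" using assms(11) by (simp add: is_prime_ideal_in_def)
  interpret odd_finite_field_primitive \<alpha> T h
    by unfold_locales (use assms(2,4,5) in \<open>simp_all add: T_def h_def\<close>)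
  interpret Zzeta_residue_field_iso \<phi> "gen_field \<beta>" k P
    by unfold_locales (use assms(13) ideal is_subfield_gen_field in auto)
  have "k dvd h" using char_2_order_dvd_half[OF assms(6,9,10)] assms(7,8) T_eq_double T_def by simp
  then have "\<zeta> ^ h = 1" using assms(14) by (auto elim!: dvdE simp: power_mult)
  moreover have "\<zeta> \<noteq> 1" using map_eq_one_imp[OF mem_gen_field] assms(8,10,15) by force
  moreover have "\<zeta> \<noteq> -1" using assms(14) char_2_order_odd[OF assms(6,9,10)] assms(8) by auto
  ultimately have four_A: "4 * (\<Sum>n\<in>slce_odd_indices \<alpha>. \<zeta> ^ n)
      = (-1) ^ h * Ksum (\<lambda>x. rho x * chi \<alpha> \<zeta> x) - Ksum (chi \<alpha> \<zeta>) - (1 - (-1) ^ h)"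
    by (rule four_times_sum_slce_odd)
  have "\<beta> \<noteq> 0" using assms(8,9) by (metis power_0_left not_one_less_zero neq0_conv zero_neq_one)
  then have "hasse_S \<alpha> 1 \<beta> = 0 \<longleftrightarrow> (\<Sum>n\<in>slce_odd_indices \<alpha>. \<zeta> ^ n) \<in> P"
    by (rule hasse_S_1_eq_0_iff[OF assms(6) mem_gen_field _ assms(15)])
  moreover have "card (UNIV :: 'a set) mod 4 = 1 \<longleftrightarrow> even h"
    using T_eq_double T_def odd_card by presburger
  ultimately show ?thesis using mem_iff_cong_4P[OF ideal four_A] by simp
qed

end
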